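(* Let $(x_k)_{k\ge0}$ be indeterminates, define $a_n=x_n$ if $n=2^k-1$ for some integer $k\ge0$ and $a_n=0$ otherwise, let $D(n)=\det\left(a_{i+j+1}\right)_{i,j=0}^{n-1}$ with $D(0)=1$, and let $T_n=\frac{D(n)D(n+2)}{D(n+1)^2}$ (in the field of rational functions). Then for all integers $k\ge1$, $n\ge0$ and $j\in\{0,1\}$, $$T_{2^{k+1}n+2^k-2+j}=(-1)^nT_{2^k-2+j}.$$
   Context: Each $D(n)$ is a nonzero polynomial, so $T_n$ is well defined. *)

theory Defs
  imports "HOL-Library.Poly_Mapping" "HOL-Computational_Algebra.Fraction_Field"
    "Jordan_Normal_Form.Determinant"
begin

text \<open>Polynomials over Q in the indeterminates x_0, x_1, ...: a monomial is a
finitely supported exponent vector nat =>0 nat, a polynomial a finitely supported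
coefficient map on monomials. This ring is an integral domain; its fraction field
is the field of rational functions Q(x_0, x_1, ...).\<close>

type_synonym mpoly = "(nat \<Rightarrow>\<^sub>0 nat) \<Rightarrow>\<^sub>0 rat"

definition xvar :: "nat \<Rightarrow> mpoly" where
  "xvar k = Poly_Mapping.single (Poly_Mapping.single k 1) 1"

definition aseq :: "nat \<Rightarrow> mpoly" where
  "aseq n = (if \<exists>k::nat. n = 2 ^ k - 1 then xvar n else 0)"

definition Dh :: "nat \<Rightarrow> mpoly" where
  "Dh n = (if n = 0 then 1 else det (mat n n (\<lambda>(i, j). aseq (i + j + 1))))"

definition Tn :: "nat \<Rightarrow> mpoly fract" where
  "Tn n = Fract (Dh n) 1 * Fract (Dh (n + 2)) 1 / (Fract (Dh (n + 1)) 1) ^ 2"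

end

theory Submission
  imports Defs "HOL-Computational_Algebra.Polynomial_Factorial"
begin

text \<open>Since a_i vanishes unless i + 1 is a power of two, in the Hankel matrix (a_(i+j+1)) of size
  2^r + e with e < 2^r the rows 2^r - 1 and 2^r + e - 1 - t (t < e) each contain a single nonzero
  entry x_(2^(r+1)-1), on the anti-diagonal i + j = 2^(r+1) - 2. Expanding successively along these
  rows and the columns they meet gives D(2^r + e) = (-1)^e x_(2^(r+1)-1)^(2e+1) D(2^r - 1 - e). The
  monomial prefactors cancel in T, so T is symmetric inside each dyadic block,
  T(2^r + e) = T(2^r - 3 - e), and changes sign across a block boundary, T(2^r - 1) = -T(2^r - 2).
  The theorem follows by strong induction on n: if 2^s <= n < 2^(s+1), the reflection in the block
  starting at 2^(k+1+s) maps the index for (n, j) to the index for (2^(s+1) - 1 - n, 1 - j), and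
  both changes flip the sign.\<close>

definition principal_minor :: "'i set \<Rightarrow> ('i \<Rightarrow> 'i \<Rightarrow> 'a::comm_ring_1) \<Rightarrow> 'a" where
  "principal_minor S f = (\<Sum>p | p permutes S. of_int (sign p) * (\<Prod>i\<in>S. f i (p i)))"

lemma det_mat_eq_principal_minor:
  "det (mat n n (\<lambda>(i, j). f i j)) = principal_minor {0..<n} f"
  unfolding det_def principal_minor_def
  by (auto intro!: sum.cong prod.cong simp: permutes_in_image)

lemma principal_minor_restrict_permutations:
  assumes "finite S"
    and "\<And>p. p permutes S \<Longrightarrow> \<not> P p \<Longrightarrow> \<exists>i\<in>S. f i (p i) = 0"
  shows "principal_minor S f =
    (\<Sum>p | p permutes S \<and> P p. of_int (sign p) * (\<Prod>i\<in>S. f i (p i)))"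
  unfolding principal_minor_def
  using assms by (intro sum.mono_neutral_right) (auto simp: finite_permutations prod_zero)

lemma permutes_fixing_eq_permutes_Diff:
  "{p. p permutes S \<and> p c = c} = {p. p permutes (S - {c})}"
proof safe
  fix p assume p: "p permutes S" "p c = c"
  show "p permutes (S - {c})"
  proof (rule permutes_superset[OF p(1)])
    fix x assume "x \<in> S - (S - {c})"
    then show "p x = x" using p(2) by blast
  qed
next
  fix p assume "p permutes (S - {c})"
  then show "p permutes S" "p c = c" by (auto intro: permutes_subset[of p "S - {c}" S] permutes_not_in)
qed

lemma sum_permutes_swapping_pair:
  assumes "u \<in> S" and "v \<in> S"
  shows "(\<Sum>p | p permutes S \<and> p u = v \<and> p v = u. g p) =
    (\<Sum>q | q permutes (S - {u, v}). g (Transposition.transpose u v \<circ> q))"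
proof (rule sum.reindex_bij_witness[of _ "\<lambda>q. Transposition.transpose u v \<circ> q"
      "\<lambda>p. Transposition.transpose u v \<circ> p"])
  fix q assume "q \<in> {q. q permutes (S - {u, v})}"
  then have q: "q permutes (S - {u, v})" by simp
  then have "q permutes S" by (rule permutes_subset) blast
  then show "Transposition.transpose u v \<circ> q \<in> {p. p permutes S \<and> p u = v \<and> p v = u}"
    using q assms by (simp add: permutes_compose permutes_swap_id permutes_not_in)
next
  fix p assume "p \<in> {p. p permutes S \<and> p u = v \<and> p v = u}"
  then have p: "p permutes S" "p u = v" "p v = u" by auto
  have "Transposition.transpose u v \<circ> p permutes S"
    using p assms by (simp add: permutes_compose permutes_swap_id)
  moreover have "(Transposition.transpose u v \<circ> p) x = x" if "x \<in> S - (S - {u, v})" for x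
    using that p by auto
  ultimately have "Transposition.transpose u v \<circ> p permutes (S - {u, v})"
    by (rule permutes_superset)
  then show "Transposition.transpose u v \<circ> p \<in> {q. q permutes (S - {u, v})}" by simp
qed (simp_all flip: comp_assoc)

lemma principal_minor_isolated_entry:
  fixes f :: "'i \<Rightarrow> 'i \<Rightarrow> 'a::comm_ring_1"
  assumes fin: "finite S" and c: "c \<in> S"
    and row: "\<And>j. j \<in> S \<Longrightarrow> j \<noteq> c \<Longrightarrow> f c j = 0"
  shows "principal_minor S f = f c c * principal_minor (S - {c}) f"
proof -
  let ?t = "\<lambda>S p. of_int (sign p) * (\<Prod>i\<in>S. f i (p i)) :: 'a"
  have "principal_minor S f = (\<Sum>p | p permutes S \<and> p c = c. ?t S p)"
  proof (rule principal_minor_restrict_permutations[where P = "\<lambda>p. p c = c", OF fin])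
    fix p assume p: "p permutes S" "\<not> p c = c"
    then have "p c \<in> S" using c by (simp add: permutes_in_image)
    then show "\<exists>i\<in>S. f i (p i) = 0" using c row p(2) by blast
  qed
  also have "\<dots> = (\<Sum>p | p permutes (S - {c}). f c c * ?t (S - {c}) p)"
    unfolding permutes_fixing_eq_permutes_Diff using fin c
    by (intro sum.cong) (auto simp: prod.remove permutes_not_in mult_ac)
  finally show ?thesis
    by (simp add: principal_minor_def sum_distrib_left)
qed

lemma prod_remove_pair:
  assumes "finite S" and "u \<in> S" and "v \<in> S" and "u \<noteq> v"
  shows "(\<Prod>i\<in>S. g i) = g u * g v * (\<Prod>i\<in>S - {u, v}. g i)"
proof -
  have "(\<Prod>i\<in>S. g i) = g u * (\<Prod>i\<in>S - {u}. g i)" using assms by (intro prod.remove)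
  also have "(\<Prod>i\<in>S - {u}. g i) = g v * (\<Prod>i\<in>S - {u} - {v}. g i)"
    using assms by (intro prod.remove) auto
  also have "S - {u} - {v} = S - {u, v}" by blast
  finally show ?thesis by (simp only: mult.assoc)
qed

lemma permutation_meets_zero_unless_swap:
  assumes u: "u \<in> S"
    and row: "\<And>j. j \<in> S \<Longrightarrow> j \<noteq> v \<Longrightarrow> f u j = 0"
    and col: "\<And>i. i \<in> S \<Longrightarrow> i \<noteq> v \<Longrightarrow> f i u = 0"
    and p: "p permutes S" and "\<not> (p u = v \<and> p v = u)"
  shows "\<exists>i\<in>S. f i (p i) = 0"
proof (cases "p u = v")
  case False
  have "p u \<in> S" using p u by (simp add: permutes_in_image)
  then have "f u (p u) = 0" using False by (intro row)
  with u show ?thesis by (rule bexI[rotated])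
next
  case True
  have "u \<in> p ` S" using permutes_image[OF p] u by simp
  then obtain w where w: "w \<in> S" "p w = u" by (metis imageE)
  then have "w \<noteq> v" using True assms(5) by blast
  then have "f w (p w) = 0" using w by (simp add: col)
  with w(1) show ?thesis by (rule bexI[rotated])
qed

lemma principal_minor_swapped_pair:
  fixes f :: "'i \<Rightarrow> 'i \<Rightarrow> 'a::comm_ring_1"
  assumes fin: "finite S" and u: "u \<in> S" and v: "v \<in> S" and "u \<noteq> v"
    and row: "\<And>j. j \<in> S \<Longrightarrow> j \<noteq> v \<Longrightarrow> f u j = 0"
    and col: "\<And>i. i \<in> S \<Longrightarrow> i \<noteq> v \<Longrightarrow> f i u = 0"
  shows "principal_minor S f = - (f u v * f v u) * principal_minor (S - {u, v}) f"
proof -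
  let ?t = "\<lambda>S p. of_int (sign p) * (\<Prod>i\<in>S. f i (p i)) :: 'a"
  let ?S' = "S - {u, v}" and ?w = "Transposition.transpose u v"
  have "principal_minor S f = (\<Sum>p | p permutes S \<and> p u = v \<and> p v = u. ?t S p)"
    using fin permutation_meets_zero_unless_swap[where f = f, OF u row col]
    by (rule principal_minor_restrict_permutations[where P = "\<lambda>p. p u = v \<and> p v = u"])
  also have "\<dots> = (\<Sum>q | q permutes ?S'. ?t S (?w \<circ> q))"
    using u v by (rule sum_permutes_swapping_pair)
  also have "\<dots> = (\<Sum>q | q permutes ?S'. - (f u v * f v u) * ?t ?S' q)"
  proof (rule sum.cong)
    fix q assume "q \<in> {q. q permutes ?S'}"
    then have q: "q permutes ?S'" by simp
    have "permutation q" using q fin by (meson finite_Diff permutation_permutes)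
    then have "sign (?w \<circ> q) = - sign q"
      using \<open>u \<noteq> v\<close> by (simp add: sign_compose sign_swap_id permutation_swap_id)
    moreover have "(\<Prod>i\<in>S. f i ((?w \<circ> q) i)) = f u v * f v u * (\<Prod>i\<in>?S'. f i (q i))"
    proof -
      have "(\<Prod>i\<in>?S'. f i ((?w \<circ> q) i)) = (\<Prod>i\<in>?S'. f i (q i))"
        using permutes_in_image[OF q] by (intro prod.cong) (auto simp: transpose_def)
      moreover have "q u = u" "q v = v" using q by (simp_all add: permutes_not_in)
      ultimately show ?thesis
        using prod_remove_pair[OF fin u v \<open>u \<noteq> v\<close>, of "\<lambda>i. f i ((?w \<circ> q) i)"] by simp
    qed
    ultimately show "?t S (?w \<circ> q) = - (f u v * f v u) * ?t ?S' q"
      by simp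
  qed simp
  finally show ?thesis
    by (simp add: principal_minor_def sum_distrib_left)
qed

definition hankel_aseq :: "nat \<Rightarrow> nat \<Rightarrow> mpoly" where
  "hankel_aseq i j = aseq (i + j + 1)"

lemma Dh_eq_principal_minor: "Dh n = principal_minor {0..<n} hankel_aseq"
  by (simp add: Dh_def hankel_aseq_def det_mat_eq_principal_minor[symmetric])

lemma aseq_eq_0_between_powers:
  fixes r N :: nat
  assumes "2 ^ r < N + 1" "N + 1 < 2 ^ Suc r"
  shows "aseq N = 0"
proof -
  have "N \<noteq> 2 ^ k - 1" for k :: nat
  proof
    assume "N = 2 ^ k - 1"
    then have "N + 1 = 2 ^ k" by simp
    with assms have "(2::nat) ^ r < 2 ^ k" "(2::nat) ^ k < 2 ^ Suc r" by (simp_all only:)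
    then have "r < k" "k < Suc r"
      using power_strict_increasing_iff[of "2::nat"] by (simp_all del: power_Suc)
    then show False by simp
  qed
  then show ?thesis by (auto simp: aseq_def)
qed

lemma aseq_power_minus_1: "aseq (2 ^ r - 1) = xvar (2 ^ r - 1)"
  by (auto simp: aseq_def)

lemma hankel_aseq_eq_0:
  fixes r i j :: nat
  assumes "2 ^ r < i + j + 2" and "i + j + 2 < 4 * 2 ^ r" and "i + j + 2 \<noteq> 2 * 2 ^ r"
  shows "hankel_aseq i j = 0"
  unfolding hankel_aseq_def
proof (cases "i + j + 2 < 2 * 2 ^ r")
  case True
  with assms(1) show "aseq (i + j + 1) = 0" by (intro aseq_eq_0_between_powers[of r]) simp_all
next
  case False
  with assms show "aseq (i + j + 1) = 0" by (intro aseq_eq_0_between_powers[of "Suc r"]) simp_all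
qed

lemma principal_minor_hankel_peel:
  fixes r e t :: nat
  defines "H \<equiv> 2 ^ r" and "z \<equiv> - (xvar (2 ^ Suc r - 1) ^ 2)"
  assumes "e < H" and "t \<le> e"
  shows "principal_minor {0..<H + e} hankel_aseq =
    z ^ t * principal_minor ({0..<H - 1 - e} \<union> {H - 1 - e + t..<H + e - t}) hankel_aseq"
  using \<open>t \<le> e\<close>
proof (induction t)
  case 0
  have "{0..<H - 1 - e} \<union> {H - 1 - e..<H + e} = {0..<H + e}" by auto
  then show ?case by simp
next
  case (Suc t)
  let ?m = "H - 1 - e"
  let ?S = "{0..<?m} \<union> {?m + t..<H + e - t}"
  let ?u = "H + e - 1 - t" and ?v = "?m + t"
  have H: "2 ^ Suc r = 2 * H" by (simp add: H_def)
  have "t < e" using Suc.prems by simp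
  have uv: "?u \<in> ?S" "?v \<in> ?S" "?u \<noteq> ?v" using \<open>t < e\<close> \<open>e < H\<close> by auto
  have row: "hankel_aseq ?u j = 0" if "j \<in> ?S" "j \<noteq> ?v" for j
    using that \<open>t < e\<close> \<open>e < H\<close> by (intro hankel_aseq_eq_0[of r]) (auto simp flip: H_def)
  have col: "hankel_aseq i ?u = 0" if "i \<in> ?S" "i \<noteq> ?v" for i
    using row[OF that] by (simp add: hankel_aseq_def add.commute)
  have "?u + ?v + 1 = 2 ^ Suc r - 1" "?v + ?u + 1 = 2 ^ Suc r - 1"
    using \<open>t < e\<close> \<open>e < H\<close> H by simp_all
  then have entry: "hankel_aseq ?u ?v = xvar (2 ^ Suc r - 1)" "hankel_aseq ?v ?u = xvar (2 ^ Suc r - 1)"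
    by (simp_all only: hankel_aseq_def aseq_power_minus_1)
  have "finite ?S" by simp
  from principal_minor_swapped_pair[where f = hankel_aseq, OF this uv row col]
  have "principal_minor ?S hankel_aseq = z * principal_minor (?S - {?u, ?v}) hankel_aseq"
    unfolding entry z_def power2_eq_square .
  also have "?S - {?u, ?v} = {0..<?m} \<union> {?m + Suc t..<H + e - Suc t}"
    using \<open>t < e\<close> \<open>e < H\<close> by auto
  finally have step: "principal_minor ?S hankel_aseq =
    z * principal_minor ({0..<?m} \<union> {?m + Suc t..<H + e - Suc t}) hankel_aseq" .
  have "principal_minor {0..<H + e} hankel_aseq = z ^ t * principal_minor ?S hankel_aseq"
    using \<open>t < e\<close> by (intro Suc.IH) simp
  then show ?case
    unfolding step by (simp only: power_Suc2 mult.assoc)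
qed

lemma Dh_block_reflection:
  fixes r e :: nat
  defines "X \<equiv> xvar (2 ^ Suc r - 1)"
  assumes "e < 2 ^ r"
  shows "Dh (2 ^ r + e) = X * (- (X ^ 2)) ^ e * Dh (2 ^ r - 1 - e)"
proof -
  define H :: nat where "H = 2 ^ r"
  let ?m = "H - 1 - e"
  have H: "1 \<le> H" "e < H" using assms by (simp_all add: H_def)
  have "{0..<?m} \<union> {?m + e..<H + e - e} = insert (H - 1) {0..<?m}" using H by auto
  with principal_minor_hankel_peel[of e r e, folded H_def X_def, OF \<open>e < H\<close> order.refl]
  have "Dh (H + e) = (- (X ^ 2)) ^ e * principal_minor (insert (H - 1) {0..<?m}) hankel_aseq"
    by (simp only: Dh_eq_principal_minor)
  also have "principal_minor (insert (H - 1) {0..<?m}) hankel_aseq =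
      hankel_aseq (H - 1) (H - 1) * principal_minor {0..<?m} hankel_aseq"
  proof -
    have "hankel_aseq (H - 1) j = 0" if "j < ?m" for j
      using that H by (intro hankel_aseq_eq_0[of r]) (simp_all flip: H_def)
    moreover have "insert (H - 1) {0..<?m} - {H - 1} = {0..<?m}" using H by auto
    ultimately show ?thesis
      by (subst principal_minor_isolated_entry[of _ "H - 1"]) auto
  qed
  also have "hankel_aseq (H - 1) (H - 1) = X"
  proof -
    have "H - 1 + (H - 1) + 1 = 2 ^ Suc r - 1" using H by (simp add: H_def)
    then show ?thesis by (simp only: hankel_aseq_def X_def aseq_power_minus_1)
  qed
  finally show ?thesis
    unfolding H_def Dh_eq_principal_minor by (simp only: mult.assoc mult.left_commute)
qed

lemma xvar_nonzero: "xvar k \<noteq> 0"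
  by (metis xvar_def lookup_single_eq lookup_zero zero_neq_one)

lemma to_fract_power: "to_fract (x ^ k) = to_fract x ^ k"
  by (induction k) simp_all

lemma Tn_eq_to_fract: "Tn n = to_fract (Dh n) * to_fract (Dh (n + 2)) / to_fract (Dh (n + 1)) ^ 2"
  by (simp add: Tn_def to_fract_def)

lemma to_fract_Dh_block_shift:
  fixes r e i :: nat
  defines "X \<equiv> to_fract (xvar (2 ^ Suc r - 1))"
  assumes "e + i < 2 ^ r"
  shows "to_fract (Dh (2 ^ r + e + i)) =
    X * (- (X ^ 2)) ^ e * (- (X ^ 2)) ^ i * to_fract (Dh (2 ^ r - 1 - e - i))"
  using Dh_block_reflection[OF assms(2)]
  by (simp add: X_def to_fract_power power_add add.assoc diff_diff_left mult.assoc)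

lemma ratio_geometric_rescaling:
  fixes y z :: "'a::field"
  assumes "y \<noteq> 0" "z \<noteq> 0"
  shows "(y * a) * (y * z ^ 2 * c) / (y * z * b) ^ 2 = a * c / b ^ 2"
  using assms by (simp add: power_mult_distrib power2_eq_square)

lemma ratio_shift_sign_flip:
  fixes X :: "'a::field"
  assumes "X \<noteq> 0"
  shows "b * (X * - (X ^ 2) * a) / (X * b) ^ 2 = - (a * (X * b) / b ^ 2)"
  using assms by (cases "b = 0") (simp_all add: field_simps power2_eq_square)

lemma Tn_block_reflection:
  assumes "e + 2 < 2 ^ r"
  shows "Tn (2 ^ r + e) = Tn (2 ^ r - 3 - e)"
proof -
  define X where "X = to_fract (xvar (2 ^ Suc r - 1))"
  define z where "z = - (X ^ 2)"
  define y where "y = X * z ^ e"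
  define m where "m = 2 ^ r - 3 - e"
  define d where "d i = to_fract (Dh i)" for i
  have shift: "d (2 ^ r + e + i) = y * z ^ i * d (2 ^ r - 1 - e - i)" if "i \<le> 2" for i
    using to_fract_Dh_block_shift[of e i r] that assms by (simp add: X_def y_def z_def d_def)
  have idx: "2 ^ r - 1 - e - 0 = m + 2" "2 ^ r - 1 - e - 1 = m + 1" "2 ^ r - 1 - e - 2 = m"
    using assms by (simp_all add: m_def)
  have "X \<noteq> 0" by (simp add: X_def xvar_nonzero)
  then have "y \<noteq> 0" "z \<noteq> 0" by (simp_all add: y_def z_def)
  have "Tn (2 ^ r + e) = d (2 ^ r + e) * d (2 ^ r + e + 2) / d (2 ^ r + e + 1) ^ 2"
    by (simp only: Tn_eq_to_fract d_def)
  also have "\<dots> = (y * d (m + 2)) * (y * z ^ 2 * d m) / (y * z * d (m + 1)) ^ 2"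
    using shift[of 0] shift[of 1] shift[of 2] unfolding idx by simp
  also have "\<dots> = d (m + 2) * d m / d (m + 1) ^ 2"
    using \<open>y \<noteq> 0\<close> \<open>z \<noteq> 0\<close> by (rule ratio_geometric_rescaling)
  also have "\<dots> = Tn (2 ^ r - 3 - e)"
    by (simp only: Tn_eq_to_fract d_def m_def mult.commute)
  finally show ?thesis .
qed

lemma Tn_block_end_sign_flip: "Tn (2 ^ Suc r - 1) = - Tn (2 ^ Suc r - 2)"
proof -
  define X where "X = to_fract (xvar (2 ^ Suc (Suc r) - 1))"
  define m :: nat where "m = 2 ^ Suc r - 2"
  define d where "d i = to_fract (Dh i)" for i
  have two: "2 \<le> (2::nat) ^ Suc r" using power_increasing[of 1 "Suc r" "2::nat"] by simp
  then have m: "2 ^ Suc r - 1 = m + 1" "2 ^ Suc r - 2 = m" "2 ^ Suc r = m + 2"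
    unfolding m_def by linarith+
  have shift: "d (2 ^ Suc r + 0 + i) = X * (- (X ^ 2)) ^ i * d (2 ^ Suc r - 1 - 0 - i)"
    if "i \<le> 1" for i
  proof -
    have "0 + i < 2 ^ Suc r" using that two by linarith
    then show ?thesis
      using to_fract_Dh_block_shift[of 0 i "Suc r"] by (simp only: X_def d_def power_0 mult_1_right)
  qed
  have "X \<noteq> 0" by (simp add: X_def xvar_nonzero)
  have "Tn (2 ^ Suc r - 1) = d (m + 1) * d (m + 1 + 2) / d (m + 1 + 1) ^ 2"
    by (simp only: Tn_eq_to_fract d_def m(1))
  also have "\<dots> = d (m + 1) * (X * - (X ^ 2) * d m) / (X * d (m + 1)) ^ 2"
    using shift[of 0] shift[of 1] unfolding m(3) by simp
  also have "\<dots> = - (d m * (X * d (m + 1)) / d (m + 1) ^ 2)"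
    using \<open>X \<noteq> 0\<close> by (rule ratio_shift_sign_flip)
  also have "\<dots> = - (d m * d (m + 2) / d (m + 1) ^ 2)"
    using shift[of 0] unfolding m(3) by simp
  also have "\<dots> = - Tn (2 ^ Suc r - 2)"
    by (simp only: Tn_eq_to_fract d_def m(2))
  finally show ?thesis .
qed

lemma Tn_block_end_swap:
  fixes k j :: nat
  assumes "1 \<le> k" and "j \<le> 1"
  shows "Tn (2 ^ k - 2 + (1 - j)) = - Tn (2 ^ k - 2 + j)"
proof -
  obtain r where k: "k = Suc r" using assms(1) by (cases k) auto
  have "2 \<le> (2::nat) ^ k" using power_increasing[of 1 k "2::nat"] assms(1) by simp
  then have "2 ^ k - 2 + 1 = (2::nat) ^ Suc r - 1" "2 ^ k - 2 = (2::nat) ^ Suc r - 2"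
    unfolding k by linarith+
  then have "Tn (2 ^ k - 2 + 1) = - Tn (2 ^ k - 2)"
    using Tn_block_end_sign_flip[of r] by simp
  with assms(2) show ?thesis
    by (cases j) auto
qed

lemma Tn_dyadic_reflection_index:
  fixes k n s j :: nat
  assumes "1 \<le> k" and "j \<le> 1" and "2 ^ s \<le> n" and "n < 2 ^ Suc s"
  shows "Tn (2 ^ (k + 1) * n + 2 ^ k - 2 + j) =
    Tn (2 ^ (k + 1) * (2 ^ Suc s - 1 - n) + 2 ^ k - 2 + (1 - j))"
proof -
  define A :: nat where "A = 2 ^ k"
  define B :: nat where "B = 2 ^ s"
  define q where "q = n - B"
  define e where "e = 2 * (A * q) + A - 2 + j"
  have "2 \<le> A" using power_increasing[of 1 k "2::nat"] assms(1) by (simp add: A_def)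
  have q: "n = B + q" "q + 1 \<le> B" using assms(3,4) by (simp_all add: q_def B_def)
  have "A * (q + 1) \<le> A * B" using q(2) by (rule mult_le_mono2)
  then have AqB: "A * q + A \<le> A * B" by (simp add: algebra_simps)
  have pow: "2 ^ (k + 1) = 2 * A" "2 ^ (k + 1 + s) = 2 * (A * B)" "2 ^ Suc s = 2 * B"
    by (simp_all add: A_def B_def power_add)
  have "2 ^ (k + 1) * n = 2 * (A * B) + 2 * (A * q)"
    unfolding pow q(1) by (simp add: algebra_simps)
  moreover have "2 ^ (k + 1) * (2 ^ Suc s - 1 - n) + 2 * (A * q) + 2 * A = 2 * (A * B)"
  proof -
    have "2 ^ Suc s - 1 - n + q + 1 = B" using q unfolding pow by linarith
    then have "2 * A * (2 ^ Suc s - 1 - n + q + 1) = 2 * (A * B)" by simp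
    then show ?thesis unfolding pow by (simp add: algebra_simps)
  qed
  ultimately have "2 ^ (k + 1) * n + 2 ^ k - 2 + j = 2 ^ (k + 1 + s) + e"
    and "e + 2 < 2 ^ (k + 1 + s)"
    and "2 ^ (k + 1 + s) - 3 - e = 2 ^ (k + 1) * (2 ^ Suc s - 1 - n) + 2 ^ k - 2 + (1 - j)"
    using \<open>2 \<le> A\<close> AqB assms(2) unfolding e_def pow(2) A_def[symmetric] by linarith+
  then show ?thesis
    using Tn_block_reflection[of e "k + 1 + s"] by simp
qed

theorem theorem5p6:
  fixes k n j :: nat
  assumes "k \<ge> 1" and "j \<in> {0, 1}"
  shows "Tn (2 ^ (k + 1) * n + 2 ^ k - 2 + j) = (-1) ^ n * Tn (2 ^ k - 2 + j)"
  using assms(2)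
proof (induction n arbitrary: j rule: less_induct)
  case (less n)
  show ?case
  proof (cases "n = 0")
    case True
    then show ?thesis by simp
  next
    case False
    then obtain s where s: "2 ^ s \<le> n" "n < 2 ^ Suc s"
      using ex_power_ivl1[of 2 n] by auto
    define n' where "n' = 2 ^ Suc s - 1 - n"
    have "j \<le> 1" using less.prems by auto
    have "n' < n" "odd (n + n')" using s by (auto simp: n'_def)
    have "Tn (2 ^ (k + 1) * n + 2 ^ k - 2 + j) = Tn (2 ^ (k + 1) * n' + 2 ^ k - 2 + (1 - j))"
      unfolding n'_def using assms(1) \<open>j \<le> 1\<close> s by (rule Tn_dyadic_reflection_index)
    also have "\<dots> = (-1) ^ n' * Tn (2 ^ k - 2 + (1 - j))"
      using \<open>n' < n\<close> \<open>j \<le> 1\<close> by (intro less.IH) auto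
    also have "\<dots> = (-1) ^ n * Tn (2 ^ k - 2 + j)"
      using \<open>odd (n + n')\<close> Tn_block_end_swap[OF assms(1) \<open>j \<le> 1\<close>]
      by (auto simp: neg_one_power_add_eq_neg_one_power_diff)
    finally show ?thesis .
  qed
qed

end
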